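(* Let $V$ be the complex vector space with basis the Schröder pseudocompositions. For Schröder pseudocompositions $I$ and $J$, write $J=J'0^m$ where $m\ge1$ and $J'$ does not end with $0$, and define $$I\prec J=J'0^{m-1}\cdot I,\qquad I\circ J=(J'\triangleright I)\cdot 0^{m-1},\qquad I\succ J=J'\cdot I\cdot 0^{m-1},$$ extended bilinearly to $V$. Then $(V,\prec,\circ,\succ)$ is a triduplicial algebra, and it is freely generated (as a triduplicial algebra) by the element $x=(1,0,0)$.
   Context: A reduced plane tree is a rooted plane tree in which every internal vertex has at least two children. Its Polish code is the sequence obtained by listing the vertices in preorder (root, then the children's subtrees from left to right, recursively), recording $0$ for a leaf and $k$ for an internal vertex with $k+1$ children. A Schröder pseudocomposition is the Polish code of a reduced plane tree with at least two leaves (such a code always ends with $0$). Here $\cdot$ denotes concatenation of sequences, $0^k$ is the sequence of $k$ zeros, and for $J'=(j_1,\dots,j_s)$, $I=(i_1,\dots,i_r)$, $J'\triangleright I=(j_1,\dots,j_{s-1},j_s+i_1,i_2,\dots,i_r)$. A triduplicial algebra is a vector space with three bilinear operations $\prec,\circ,\succ$ satisfying: $(x\prec y)\prec z=x\prec(y\prec z)$, $(x\circ y)\circ z=x\circ(y\circ z)$, $(x\succ y)\succ z=x\succ(y\succ z)$, $(x\succ y)\prec z=x\succ(y\prec z)$, $(x\circ y)\prec z=x\circ(y\prec z)$, $(x\succ y)\circ z=x\succ(y\circ z)$, $(x\circ y)\succ z=x\circ(y\succ z)$. It is freely generated by $x$ if for every triduplicial algebra $W$ and every $w\in W$ there is a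 unique morphism of triduplicial algebras $V\to W$ sending $x$ to $w$. *)

theory Defs
  imports Complex_Main
begin

datatype ptree = Leaf | Node "ptree list"

fun reduced :: "ptree \<Rightarrow> bool" where
  "reduced Leaf = True"
| "reduced (Node ts) = (length ts \<ge> 2 \<and> (\<forall>t\<in>set ts. reduced t))"

fun leaves :: "ptree \<Rightarrow> nat" where
  "leaves Leaf = 1"
| "leaves (Node ts) = sum_list (map leaves ts)"

fun polish :: "ptree \<Rightarrow> nat list" where
  "polish Leaf = [0]"
| "polish (Node ts) = (length ts - 1) # concat (map polish ts)"

definition schroeder_pc :: "nat list set" where
  "schroeder_pc = {polish t | t. reduced t \<and> leaves t \<ge> 2}"

definition trail_zeros :: "nat list \<Rightarrow> nat" where
  "trail_zeros J = length (takeWhile (\<lambda>a. a = 0) (rev J))"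

definition strip_zeros :: "nat list \<Rightarrow> nat list" where
  "strip_zeros J = rev (dropWhile (\<lambda>a. a = 0) (rev J))"

definition tri_join :: "nat list \<Rightarrow> nat list \<Rightarrow> nat list" where
  "tri_join J' I = butlast J' @ [last J' + hd I] @ tl I"

definition prec_pc :: "nat list \<Rightarrow> nat list \<Rightarrow> nat list" where
  "prec_pc I J = strip_zeros J @ replicate (trail_zeros J - 1) 0 @ I"

definition circ_pc :: "nat list \<Rightarrow> nat list \<Rightarrow> nat list" where
  "circ_pc I J = tri_join (strip_zeros J) I @ replicate (trail_zeros J - 1) 0"

definition succ_pc :: "nat list \<Rightarrow> nat list \<Rightarrow> nat list" where
  "succ_pc I J = strip_zeros J @ I @ replicate (trail_zeros J - 1) 0"

definition Vset :: "(nat list \<Rightarrow> complex) set" where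
  "Vset = {f. finite {I. f I \<noteq> 0} \<and> {I. f I \<noteq> 0} \<subseteq> schroeder_pc}"

definition addV :: "(nat list \<Rightarrow> complex) \<Rightarrow> (nat list \<Rightarrow> complex) \<Rightarrow> nat list \<Rightarrow> complex" where
  "addV f g = (\<lambda>K. f K + g K)"

definition scaleV :: "complex \<Rightarrow> (nat list \<Rightarrow> complex) \<Rightarrow> nat list \<Rightarrow> complex" where
  "scaleV c f = (\<lambda>K. c * f K)"

definition zeroV :: "nat list \<Rightarrow> complex" where
  "zeroV = (\<lambda>K. 0)"

definition basisV :: "nat list \<Rightarrow> nat list \<Rightarrow> complex" where
  "basisV I = (\<lambda>K. if K = I then 1 else 0)"

definition bilin_ext :: "(nat list \<Rightarrow> nat list \<Rightarrow> nat list) \<Rightarrow>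
    (nat list \<Rightarrow> complex) \<Rightarrow> (nat list \<Rightarrow> complex) \<Rightarrow> nat list \<Rightarrow> complex" where
  "bilin_ext b f g = (\<lambda>K. \<Sum>I\<in>{I. f I \<noteq> 0}. \<Sum>J\<in>{J. g J \<noteq> 0}.
      if b I J = K then f I * g J else 0)"

definition precV where "precV = bilin_ext prec_pc"
definition circV where "circV = bilin_ext circ_pc"
definition succV where "succV = bilin_ext succ_pc"

definition tridup_identities :: "'a set \<Rightarrow> ('a \<Rightarrow> 'a \<Rightarrow> 'a) \<Rightarrow> ('a \<Rightarrow> 'a \<Rightarrow> 'a)
    \<Rightarrow> ('a \<Rightarrow> 'a \<Rightarrow> 'a) \<Rightarrow> bool" where
  "tridup_identities A p c s \<longleftrightarrow> (\<forall>x\<in>A. \<forall>y\<in>A. \<forall>z\<in>A.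
      p (p x y) z = p x (p y z) \<and>
      c (c x y) z = c x (c y z) \<and>
      s (s x y) z = s x (s y z) \<and>
      p (s x y) z = s x (p y z) \<and>
      p (c x y) z = c x (p y z) \<and>
      c (s x y) z = s x (c y z) \<and>
      s (c x y) z = c x (s y z))"

definition bilinear_wrt :: "(complex \<Rightarrow> 'w::ab_group_add \<Rightarrow> 'w) \<Rightarrow> ('w \<Rightarrow> 'w \<Rightarrow> 'w) \<Rightarrow> bool" where
  "bilinear_wrt sc op \<longleftrightarrow> (\<forall>y. Vector_Spaces.linear sc sc (\<lambda>x. op x y)) \<and>
                          (\<forall>x. Vector_Spaces.linear sc sc (op x))"

definition triduplicial_algebra ::
  "(complex \<Rightarrow> 'w::ab_group_add \<Rightarrow> 'w) \<Rightarrow> ('w \<Rightarrow> 'w \<Rightarrow> 'w) \<Rightarrow> ('w \<Rightarrow> 'w \<Rightarrow> 'w)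
     \<Rightarrow> ('w \<Rightarrow> 'w \<Rightarrow> 'w) \<Rightarrow> bool" where
  "triduplicial_algebra sc p c s \<longleftrightarrow> vector_space sc \<and>
     bilinear_wrt sc p \<and> bilinear_wrt sc c \<and> bilinear_wrt sc s \<and> tridup_identities UNIV p c s"

definition V_is_triduplicial :: bool where
  "V_is_triduplicial \<longleftrightarrow>
     zeroV \<in> Vset \<and>
     (\<forall>f\<in>Vset. \<forall>g\<in>Vset. addV f g \<in> Vset) \<and>
     (\<forall>c. \<forall>f\<in>Vset. scaleV c f \<in> Vset) \<and>
     (\<forall>op\<in>{precV, circV, succV}.
        (\<forall>f\<in>Vset. \<forall>g\<in>Vset. op f g \<in> Vset) \<and>
        (\<forall>f\<in>Vset. \<forall>g\<in>Vset. \<forall>h\<in>Vset. op (addV f g) h = addV (op f h) (op g h)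
                                   \<and> op h (addV f g) = addV (op h f) (op h g)) \<and>
        (\<forall>c. \<forall>f\<in>Vset. \<forall>g\<in>Vset. op (scaleV c f) g = scaleV c (op f g)
                                \<and> op f (scaleV c g) = scaleV c (op f g))) \<and>
     tridup_identities Vset precV circV succV"

text \<open>Morphisms of triduplicial algebras V \<rightarrow> W (only their values on V matter).\<close>
definition V_morphism ::
  "(complex \<Rightarrow> 'w::ab_group_add \<Rightarrow> 'w) \<Rightarrow> ('w \<Rightarrow> 'w \<Rightarrow> 'w) \<Rightarrow> ('w \<Rightarrow> 'w \<Rightarrow> 'w)
     \<Rightarrow> ('w \<Rightarrow> 'w \<Rightarrow> 'w) \<Rightarrow> ((nat list \<Rightarrow> complex) \<Rightarrow> 'w) \<Rightarrow> bool" where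
  "V_morphism sc p c s \<phi> \<longleftrightarrow>
     (\<forall>f\<in>Vset. \<forall>g\<in>Vset. \<phi> (addV f g) = \<phi> f + \<phi> g) \<and>
     (\<forall>a. \<forall>f\<in>Vset. \<phi> (scaleV a f) = sc a (\<phi> f)) \<and>
     (\<forall>f\<in>Vset. \<forall>g\<in>Vset. \<phi> (precV f g) = p (\<phi> f) (\<phi> g)) \<and>
     (\<forall>f\<in>Vset. \<forall>g\<in>Vset. \<phi> (circV f g) = c (\<phi> f) (\<phi> g)) \<and>
     (\<forall>f\<in>Vset. \<forall>g\<in>Vset. \<phi> (succV f g) = s (\<phi> f) (\<phi> g))"

end

theory Submission
  imports Defs
begin

text \<open>A word is a Schroeder pseudocomposition iff it has length at least 2 and satisfies
  Lukasiewicz's criterion: giving the letter \<open>k > 0\<close> weight \<open>k\<close> and the letter \<open>0\<close> weight \<open>-1\<close>, the total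
  weight is \<open>-1\<close> and every proper prefix has nonnegative weight. Writing a code as \<open>Y 0\<^sup>n\<close> with
  \<open>Y\<close> not ending in \<open>0\<close>, the three operations only concatenate or join the \<open>Y\<close>'s and add the
  exponents, so the seven identities hold on codes, and hence on \<open>V\<close> by bilinearity.

  For freeness, the identities read from right to left push operations to the left; every code
  other than \<open>x\<close> is uniquely of the form \<open>A \<star> x\<close>, \<open>A \<prec> (L \<succ> x)\<close> or \<open>A \<prec> (L \<circ> x)\<close>, uniqueness coming
  from the unique factorisation of the forest below the root into Lukasiewicz words. A morphism
  sending \<open>x\<close> to \<open>w\<close> must therefore evaluate codes recursively along these decompositions, and an
  induction on the right factor shows that this evaluation respects all three operations.\<close>

section \<open>Lukasiewicz words\<close>

definition letter_weight :: "nat \<Rightarrow> int" where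
  "letter_weight a = (if a = 0 then -1 else int a)"

definition weight :: "nat list \<Rightarrow> int" where
  "weight L = sum_list (map letter_weight L)"

definition lukasiewicz :: "nat list \<Rightarrow> bool" where
  "lukasiewicz L \<longleftrightarrow> weight L = -1 \<and> (\<forall>i<length L. weight (take i L) \<ge> 0)"

lemma weight_simps [simp]:
  "weight [] = 0" "weight (a # L) = letter_weight a + weight L" "weight (L @ M) = weight L + weight M"
  by (simp_all add: weight_def)

lemma lukasiewicz_not_Nil: "lukasiewicz L \<Longrightarrow> L \<noteq> []"
  by (auto simp: lukasiewicz_def)

lemma lukasiewicz_last: "lukasiewicz L \<Longrightarrow> last L = 0"
proof -
  assume L: "lukasiewicz L"
  have split: "L = butlast L @ [last L]" using lukasiewicz_not_Nil[OF L] by simp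
  have "weight (butlast L) + letter_weight (last L) = -1"
    using L unfolding lukasiewicz_def by (subst (asm) split) simp
  moreover have "weight (butlast L) \<ge> 0"
    using L lukasiewicz_not_Nil[OF L] by (auto simp: lukasiewicz_def butlast_conv_take)
  ultimately show ?thesis by (simp add: letter_weight_def split: if_splits)
qed

lemma lukasiewicz_singleton_iff: "lukasiewicz [a] \<longleftrightarrow> a = 0"
  by (auto simp: lukasiewicz_def letter_weight_def)

lemma lukasiewicz_hd_nonzero: "lukasiewicz L \<Longrightarrow> length L \<ge> 2 \<Longrightarrow> hd L \<noteq> 0"
  unfolding lukasiewicz_def
  by (cases L) (auto simp: letter_weight_def split: if_splits dest!: spec[where x=1])

lemma lukasiewicz_length_ge_2_iff: "lukasiewicz L \<Longrightarrow> length L \<ge> 2 \<longleftrightarrow> L \<noteq> [0]"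
  by (cases L rule: remdups_adj.cases) (auto simp: lukasiewicz_singleton_iff dest: lukasiewicz_not_Nil)

lemma lukasiewicz_graft:
  assumes L: "lukasiewicz (Y @ 0 # Z)" and I: "lukasiewicz I"
  shows "lukasiewicz (Y @ I @ Z)"
proof -
  have "weight (take i (Y @ I @ Z)) \<ge> 0" if i: "i < length (Y @ I @ Z)" for i
  proof -
    consider "i \<le> length Y" | "length Y < i" "i < length Y + length I" | "length Y + length I \<le> i"
      by linarith
    then show ?thesis
    proof cases
      case 1
      then have "take i (Y @ I @ Z) = take i (Y @ 0 # Z)" "i < length (Y @ 0 # Z)" by simp_all
      then show ?thesis using L unfolding lukasiewicz_def by metis
    next
      case 2
      have "weight Y \<ge> 0" using L unfolding lukasiewicz_def by (auto dest!: spec[where x="length Y"])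
      moreover have "weight (take (i - length Y) I) \<ge> 0" using I 2 unfolding lukasiewicz_def by simp
      ultimately show ?thesis using 2 by simp
    next
      case 3
      define j where "j = i - length Y - length I"
      have "take (length Y + 1 + j) (Y @ 0 # Z) = Y @ 0 # take j Z" by simp
      moreover have "length Y + 1 + j < length (Y @ 0 # Z)" using i 3 by (simp add: j_def)
      ultimately have "weight (Y @ 0 # take j Z) \<ge> 0" using L unfolding lukasiewicz_def by metis
      moreover have "take i (Y @ I @ Z) = Y @ I @ take j Z" using 3 by (simp add: j_def)
      ultimately show ?thesis using I by (simp add: lukasiewicz_def letter_weight_def)
    qed
  qed
  moreover have "weight (Y @ I @ Z) = -1"
    using L I by (simp add: lukasiewicz_def letter_weight_def)
  ultimately show ?thesis unfolding lukasiewicz_def by blast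
qed

lemma lukasiewicz_merge:
  assumes L: "lukasiewicz (Y @ x # y # Z)" and "x > 0" "y > 0"
  shows "lukasiewicz (Y @ (x + y) # Z)"
proof -
  have "weight (take i (Y @ (x + y) # Z)) \<ge> 0" if i: "i < length (Y @ (x + y) # Z)" for i
  proof (cases "i \<le> length Y")
    case True
    then have "take i (Y @ (x + y) # Z) = take i (Y @ x # y # Z)" "i < length (Y @ x # y # Z)"
      by simp_all
    then show ?thesis using L unfolding lukasiewicz_def by metis
  next
    case False
    define j where "j = i - length Y - 1"
    have "take (length Y + 2 + j) (Y @ x # y # Z) = Y @ x # y # take j Z" by simp
    moreover have "length Y + 2 + j < length (Y @ x # y # Z)" using i False by (simp add: j_def)
    ultimately have "weight (Y @ x # y # take j Z) \<ge> 0" using L unfolding lukasiewicz_def by metis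
    moreover have "take i (Y @ (x + y) # Z) = Y @ (x + y) # take j Z"
      using False by (simp add: j_def Suc_diff_Suc take_Cons')
    ultimately show ?thesis using assms by (simp add: letter_weight_def)
  qed
  moreover have "weight (Y @ (x + y) # Z) = -1"
    using assms by (simp add: lukasiewicz_def letter_weight_def)
  ultimately show ?thesis unfolding lukasiewicz_def by blast
qed

lemma lukasiewicz_append_cancel:
  assumes "lukasiewicz U" "lukasiewicz V" "U @ X = V @ Y"
  shows "U = V \<and> X = Y"
proof -
  have "\<not> length U < length V" if "lukasiewicz U" "lukasiewicz V" "U @ X = V @ Y" for U V X Y
  proof
    assume "length U < length V"
    moreover from this have "take (length U) V = U"
      using that(3) by (metis append_eq_append_conv_if less_imp_le_nat)
    ultimately show False using that(1,2) unfolding lukasiewicz_def by auto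
  qed
  from this[of U V X Y] this[of V U Y X] assms have "length U = length V" by fastforce
  thus ?thesis using assms(3) by simp
qed

lemma concat_lukasiewicz_inj:
  assumes "\<forall>F\<in>set Fs. lukasiewicz F" "\<forall>G\<in>set Gs. lukasiewicz G" "concat Fs = concat Gs"
  shows "Fs = Gs"
  using assms
proof (induction Fs arbitrary: Gs)
  case Nil
  then show ?case by (cases Gs) (auto dest: lukasiewicz_not_Nil)
next
  case (Cons F Fs)
  then obtain G Gs' where Gs: "Gs = G # Gs'" by (cases Gs) (auto dest: lukasiewicz_not_Nil)
  have "lukasiewicz F" "lukasiewicz G" "F @ concat Fs = G @ concat Gs'"
    using Cons.prems unfolding Gs by simp_all
  then have "F = G" "concat Fs = concat Gs'" using lukasiewicz_append_cancel by blast+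
  moreover have "\<forall>F\<in>set Fs. lukasiewicz F" "\<forall>G\<in>set Gs'. lukasiewicz G"
    using Cons.prems unfolding Gs by simp_all
  ultimately show ?case using Cons.IH Gs by blast
qed

lemma weight_first_passage:
  assumes "weight R < - int n"
  obtains M T where "R = M @ T" "weight M = - int n" "\<forall>i<length M. weight (take i M) > - int n"
  using assms
proof (induction R arbitrary: n thesis)
  case Nil
  then show ?case by simp
next
  case (Cons a R)
  show ?case
  proof (cases "n = 0")
    case True
    then show ?thesis using Cons.prems(1)[of "[]"] by simp
  next
    case False
    define n' where "n' = nat (int n + letter_weight a)"
    have n': "int n' = int n + letter_weight a" using False by (simp add: n'_def letter_weight_def)
    obtain M T where MT: "R = M @ T" "weight M = - int n'"
      and M_pre: "\<forall>i<length M. weight (take i M) > - int n'"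
      using Cons.IH[of n'] Cons.prems(2) n' by auto
    have "weight (take i (a # M)) > - int n" if "i < length (a # M)" for i
      using that M_pre n' False by (cases i) auto
    then show ?thesis using Cons.prems(1)[of "a # M" T] MT n' by simp
  qed
qed

text \<open>\<open>T\<close> is the code of the last subtree of the root and \<open>M\<close> the concatenation of the others.\<close>

lemma lukasiewicz_first_return:
  assumes K: "lukasiewicz K" and "length K \<ge> 2"
  obtains M T where "K = hd K # M @ T" "lukasiewicz T"
    "hd K = 1 \<and> lukasiewicz M \<or> hd K \<ge> 2 \<and> lukasiewicz ((hd K - 1) # M)"
proof -
  obtain k R where KR: "K = k # R" using assms by (cases K) auto
  have k: "k > 0" using lukasiewicz_hd_nonzero[OF assms] KR by simp
  have R_pre: "weight (take i R) \<ge> - int k" if "i < length R" for i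
    using K that k unfolding lukasiewicz_def KR
    by (auto simp: letter_weight_def dest!: spec[where x="Suc i"])
  have "weight R < - int k" using K k by (simp add: KR lukasiewicz_def letter_weight_def)
  then obtain M T where MT: "R = M @ T" and wM: "weight M = - int k"
    and M_pre: "\<forall>i<length M. weight (take i M) > - int k"
    by (rule weight_first_passage)
  have "lukasiewicz T"
  proof -
    have "weight (take i T) \<ge> 0" if "i < length T" for i
      using R_pre[of "length M + i"] that wM by (simp add: MT)
    moreover have "weight T = -1" using K wM k by (simp add: KR MT lukasiewicz_def letter_weight_def)
    ultimately show ?thesis by (simp add: lukasiewicz_def)
  qed
  moreover have "k = 1 \<and> lukasiewicz M \<or> k \<ge> 2 \<and> lukasiewicz ((k - 1) # M)"
  proof (cases "k = 1")
    case True
    then show ?thesis using wM M_pre by (auto simp: lukasiewicz_def)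
  next
    case False
    have "weight (take i ((k - 1) # M)) \<ge> 0" if "i < length ((k - 1) # M)" for i
      using that M_pre False k by (cases i) (auto simp: letter_weight_def)
    then show ?thesis using wM False k by (simp add: lukasiewicz_def letter_weight_def)
  qed
  ultimately show ?thesis using that KR MT by simp
qed

lemma lukasiewicz_binary_node:
  assumes "lukasiewicz M" "lukasiewicz T"
  shows "lukasiewicz (1 # M @ T)"
proof -
  have "lukasiewicz ([1] @ 0 # [0])" by (simp add: lukasiewicz_def letter_weight_def less_Suc_eq)
  then have "lukasiewicz ((1 # M) @ 0 # [])" using lukasiewicz_graft[OF _ assms(1)] by fastforce
  then show ?thesis using lukasiewicz_graft[OF _ assms(2)] by fastforce
qed

lemma lukasiewicz_add_child:
  assumes "a > 0" "lukasiewicz (a # M)" "lukasiewicz T"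
  shows "lukasiewicz (Suc a # M @ T)"
  using lukasiewicz_merge[of "[]" 1 a "M @ T"] lukasiewicz_binary_node[OF assms(2,3)] assms(1) by simp

lemma lukasiewicz_node:
  "length ts \<ge> 2 \<Longrightarrow> \<forall>L\<in>set ts. lukasiewicz L \<Longrightarrow> lukasiewicz ((length ts - 1) # concat ts)"
proof (induction ts rule: rev_induct)
  case Nil
  then show ?case by simp
next
  case (snoc t ts)
  show ?case
  proof (cases "length ts = 1")
    case True
    then obtain u where "ts = [u]" by (cases ts) auto
    then show ?thesis using snoc.prems lukasiewicz_binary_node[of u t] by simp
  next
    case False
    have "length ts \<ge> 2" using False snoc.prems(1) by simp
    then obtain n where n: "length ts = Suc (Suc n)" by (metis add_2_eq_Suc le_Suc_ex)
    then have "lukasiewicz (Suc n # concat ts)" using snoc.IH snoc.prems(2) by simp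
    then show ?thesis using lukasiewicz_add_child[of "Suc n" "concat ts" t] snoc.prems n by simp
  qed
qed

lemma lukasiewicz_polish: "reduced t \<Longrightarrow> lukasiewicz (polish t)"
proof (induction t)
  case Leaf
  then show ?case by (simp add: lukasiewicz_singleton_iff)
next
  case (Node ts)
  then show ?case using lukasiewicz_node[of "map polish ts"] by simp
qed

lemma lukasiewicz_imp_polish: "lukasiewicz K \<Longrightarrow> \<exists>t. reduced t \<and> polish t = K"
proof (induction "length K" arbitrary: K rule: less_induct)
  case less
  show ?case
  proof (cases "length K \<ge> 2")
    case False
    then have "K = [0]" using less.prems lukasiewicz_length_ge_2_iff by blast
    then show ?thesis by (intro exI[of _ Leaf]) simp
  next
    case True
    obtain M T where K: "K = hd K # M @ T" and "lukasiewicz T"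
      and M: "hd K = 1 \<and> lukasiewicz M \<or> hd K \<ge> 2 \<and> lukasiewicz ((hd K - 1) # M)"
      using lukasiewicz_first_return[OF less.prems True] by blast
    have lK: "length K = Suc (length M + length T)" by (subst K) simp
    have T_ne: "T \<noteq> []" using lukasiewicz_not_Nil[OF \<open>lukasiewicz T\<close>] .
    obtain tT where tT: "reduced tT" "polish tT = T"
      using less.hyps[of T] lK \<open>lukasiewicz T\<close> by auto
    from M show ?thesis
    proof
      assume M: "hd K = 1 \<and> lukasiewicz M"
      obtain tM where "reduced tM" "polish tM = M"
        using less.hyps[of M] lK T_ne M by fastforce
      then show ?thesis using tT M K by (intro exI[of _ "Node [tM, tT]"]) simp
    next
      assume M: "hd K \<ge> 2 \<and> lukasiewicz ((hd K - 1) # M)"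
      obtain t where t: "reduced t" "polish t = (hd K - 1) # M"
        using less.hyps[of "(hd K - 1) # M"] lK T_ne M by fastforce
      then obtain ts where ts: "t = Node ts" using M by (cases t) auto
      have "length ts = hd K" "concat (map polish ts) = M" using t ts M by auto
      then have "polish (Node (ts @ [tT])) = K" using tT K by simp
      moreover have "reduced (Node (ts @ [tT]))" using t ts tT by auto
      ultimately show ?thesis by blast
    qed
  qed
qed

lemma reduced_leaves_ge_2_iff: "reduced t \<Longrightarrow> leaves t \<ge> 2 \<longleftrightarrow> t \<noteq> Leaf"
proof -
  have pos: "reduced t \<Longrightarrow> leaves t \<ge> 1" for t
  proof (induction t)
    case (Node ts)
    then obtain u us where "ts = u # us" by (cases ts) auto
    then show ?case using Node by (simp add: trans_le_add1)
  qed simp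
  assume "reduced t"
  then show ?thesis
  proof (cases t)
    case (Node ts)
    then obtain u v us where "ts = u # v # us"
      using \<open>reduced t\<close> by (cases ts rule: remdups_adj.cases) auto
    moreover have "leaves u \<ge> 1" "leaves v \<ge> 1" using pos \<open>reduced t\<close> Node calculation by auto
    ultimately show ?thesis using Node by simp
  qed simp
qed

lemma schroeder_pc_iff: "K \<in> schroeder_pc \<longleftrightarrow> lukasiewicz K \<and> length K \<ge> 2"
proof
  assume "K \<in> schroeder_pc"
  then obtain t where t: "K = polish t" "reduced t" "t \<noteq> Leaf"
    unfolding schroeder_pc_def using reduced_leaves_ge_2_iff by blast
  then have "lukasiewicz K" using lukasiewicz_polish by blast
  moreover have "K \<noteq> [0]" using t by (cases t) auto
  ultimately show "lukasiewicz K \<and> length K \<ge> 2" using lukasiewicz_length_ge_2_iff by blast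
next
  assume K: "lukasiewicz K \<and> length K \<ge> 2"
  then obtain t where "reduced t" "polish t = K" using lukasiewicz_imp_polish by blast
  moreover have "t \<noteq> Leaf" using K calculation by auto
  ultimately show "K \<in> schroeder_pc"
    unfolding schroeder_pc_def using reduced_leaves_ge_2_iff by blast
qed

section \<open>The operations on zero-padded words\<close>

definition no_trailing_zero :: "nat list \<Rightarrow> bool" where
  "no_trailing_zero Y \<longleftrightarrow> Y \<noteq> [] \<and> last Y \<noteq> 0"

definition zero_pad :: "nat list \<Rightarrow> nat \<Rightarrow> nat list" where
  "zero_pad Y n = Y @ replicate n 0"

lemma strip_zeros_append_trail_zeros: "strip_zeros J @ replicate (trail_zeros J) 0 = J"
proof -
  have "takeWhile (\<lambda>a. a = 0) L = replicate (length (takeWhile (\<lambda>a. a = 0) L)) (0::nat)" for L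
    by (induction L) auto
  then have "rev (takeWhile (\<lambda>a. a = 0) (rev J)) = replicate (trail_zeros J) 0"
    unfolding trail_zeros_def by (metis rev_replicate)
  then show ?thesis
    unfolding strip_zeros_def by (metis rev_append takeWhile_dropWhile_id rev_rev_ident)
qed

lemma
  assumes "no_trailing_zero Y"
  shows strip_zeros_zero_pad: "strip_zeros (zero_pad Y n) = Y"
    and trail_zeros_zero_pad: "trail_zeros (zero_pad Y n) = n"
proof -
  have Y: "takeWhile (\<lambda>a. a = 0) (rev Y) = []" "dropWhile (\<lambda>a. a = 0) (rev Y) = rev Y"
    using assms by (cases Y rule: rev_cases; simp add: no_trailing_zero_def)+
  have "takeWhile (\<lambda>a. a = 0) (replicate n 0 @ rev Y) = replicate n 0 @ takeWhile (\<lambda>a. a = 0) (rev Y)"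
    "dropWhile (\<lambda>a. a = 0) (replicate n 0 @ rev Y) = dropWhile (\<lambda>a. a = 0) (rev Y)"
    by (induction n) auto
  then show "strip_zeros (zero_pad Y n) = Y" "trail_zeros (zero_pad Y n) = n"
    using Y by (simp_all add: strip_zeros_def trail_zeros_def zero_pad_def)
qed

lemma schroeder_pc_zero_pad:
  assumes "I \<in> schroeder_pc"
  obtains Y n where "I = zero_pad Y n" "no_trailing_zero Y" "n \<ge> 1"
proof
  have L: "lukasiewicz I" "length I \<ge> 2" using assms by (simp_all add: schroeder_pc_iff)
  note I = strip_zeros_append_trail_zeros[of I, symmetric]
  show "I = zero_pad (strip_zeros I) (trail_zeros I)" by (simp add: zero_pad_def I[symmetric])
  have ne: "strip_zeros I \<noteq> []"
  proof
    assume "strip_zeros I = []"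
    then have "I = replicate (trail_zeros I) 0" using I by simp
    moreover have "I \<noteq> []" using L by auto
    ultimately have "hd I = 0" by (metis hd_replicate replicate_empty)
    then show False using lukasiewicz_hd_nonzero L by blast
  qed
  then have "last (strip_zeros I) \<noteq> 0"
    unfolding strip_zeros_def using hd_dropWhile[of "\<lambda>a. a = 0" "rev I"] by (auto simp: last_rev)
  then show "no_trailing_zero (strip_zeros I)" using ne by (simp add: no_trailing_zero_def)
  show "trail_zeros I \<ge> 1"
  proof (rule ccontr)
    assume "\<not> trail_zeros I \<ge> 1"
    then have "last I = last (strip_zeros I)" by (subst I) simp
    then show False using lukasiewicz_last L \<open>last (strip_zeros I) \<noteq> 0\<close> by simp
  qed
qed

lemma prec_pc_eq_butlast:
  assumes "J \<noteq> []" "last J = 0"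
  shows "prec_pc I J = butlast J @ I"
proof -
  have "trail_zeros J \<noteq> 0"
    using assms by (cases J rule: rev_cases) (auto simp: trail_zeros_def)
  then obtain n where n: "trail_zeros J = Suc n" by (cases "trail_zeros J") auto
  have "butlast J = strip_zeros J @ replicate n 0"
    using strip_zeros_append_trail_zeros[of J] n
    by (metis butlast_append butlast_snoc replicate_append_same replicate_Suc list.distinct(1))
  then show ?thesis unfolding prec_pc_def using n by simp
qed

lemma tri_join_append_left: "Y \<noteq> [] \<Longrightarrow> tri_join (Z @ Y) X = Z @ tri_join Y X"
  by (simp add: tri_join_def butlast_append)

lemma tri_join_append_right: "X \<noteq> [] \<Longrightarrow> tri_join Y (X @ W) = tri_join Y X @ W"
  by (cases X) (simp_all add: tri_join_def)

lemma tri_join_assoc: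
  "Y \<noteq> [] \<Longrightarrow> X \<noteq> [] \<Longrightarrow> tri_join (tri_join Z Y) X = tri_join Z (tri_join Y X)"
  by (cases X; cases Y) (simp_all add: tri_join_def butlast_append)

lemma tri_join_no_trailing_zero:
  "no_trailing_zero Y \<Longrightarrow> no_trailing_zero X \<Longrightarrow> no_trailing_zero (tri_join Y X)"
  by (cases X) (auto simp: no_trailing_zero_def tri_join_def)

lemma no_trailing_zero_append: "no_trailing_zero Y \<Longrightarrow> no_trailing_zero (X @ Y)"
  by (simp add: no_trailing_zero_def)

lemma
  assumes X: "no_trailing_zero X" and Y: "no_trailing_zero Y" and "m \<ge> 1" "n \<ge> 1"
  shows prec_pc_zero_pad: "prec_pc (zero_pad X m) (zero_pad Y n) = zero_pad (Y @ replicate (n - 1) 0 @ X) m"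
    and succ_pc_zero_pad: "succ_pc (zero_pad X m) (zero_pad Y n) = zero_pad (Y @ X) (m + n - 1)"
    and circ_pc_zero_pad: "circ_pc (zero_pad X m) (zero_pad Y n) = zero_pad (tri_join Y X) (m + n - 1)"
proof -
  have "X \<noteq> []" using X by (simp add: no_trailing_zero_def)
  obtain n' where n: "n = Suc n'" using assms by (cases n) auto
  show "prec_pc (zero_pad X m) (zero_pad Y n) = zero_pad (Y @ replicate (n - 1) 0 @ X) m"
    using n by (subst prec_pc_eq_butlast)
      (auto simp: zero_pad_def butlast_append replicate_append_same[symmetric])
  show "succ_pc (zero_pad X m) (zero_pad Y n) = zero_pad (Y @ X) (m + n - 1)"
    unfolding succ_pc_def strip_zeros_zero_pad[OF Y] trail_zeros_zero_pad[OF Y]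
    using assms by (simp add: zero_pad_def replicate_add[symmetric])
  show "circ_pc (zero_pad X m) (zero_pad Y n) = zero_pad (tri_join Y X) (m + n - 1)"
    unfolding circ_pc_def strip_zeros_zero_pad[OF Y] trail_zeros_zero_pad[OF Y]
    using assms \<open>X \<noteq> []\<close> by (simp add: zero_pad_def replicate_add[symmetric] tri_join_append_right)
qed

lemma schroeder_pc_tridup_identities: "tridup_identities schroeder_pc prec_pc circ_pc succ_pc"
  unfolding tridup_identities_def
proof (intro ballI)
  fix I J K assume "I \<in> schroeder_pc" "J \<in> schroeder_pc" "K \<in> schroeder_pc"
  then obtain X a Y b Z c where
    I: "I = zero_pad X a" "no_trailing_zero X" "a \<ge> 1" and
    J: "J = zero_pad Y b" "no_trailing_zero Y" "b \<ge> 1" and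
    K: "K = zero_pad Z c" "no_trailing_zero Z" "c \<ge> 1"
    by (metis schroeder_pc_zero_pad)
  have "X \<noteq> []" "Y \<noteq> []" "Z \<noteq> []" using I J K by (simp_all add: no_trailing_zero_def)
  then show "prec_pc (prec_pc I J) K = prec_pc I (prec_pc J K) \<and>
      circ_pc (circ_pc I J) K = circ_pc I (circ_pc J K) \<and>
      succ_pc (succ_pc I J) K = succ_pc I (succ_pc J K) \<and>
      prec_pc (succ_pc I J) K = succ_pc I (prec_pc J K) \<and>
      prec_pc (circ_pc I J) K = circ_pc I (prec_pc J K) \<and>
      circ_pc (succ_pc I J) K = succ_pc I (circ_pc J K) \<and>
      succ_pc (circ_pc I J) K = circ_pc I (succ_pc J K)"
    using I J K
    by (simp add: prec_pc_zero_pad succ_pc_zero_pad circ_pc_zero_pad no_trailing_zero_append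
        tri_join_no_trailing_zero tri_join_assoc tri_join_append_left tri_join_append_right
        add.commute add.left_commute)
qed

lemma
  assumes I: "I \<in> schroeder_pc" and J: "J \<in> schroeder_pc"
  shows prec_pc_closed: "prec_pc I J \<in> schroeder_pc"
    and succ_pc_closed: "succ_pc I J \<in> schroeder_pc"
    and circ_pc_closed: "circ_pc I J \<in> schroeder_pc"
proof -
  have LI: "lukasiewicz I" "length I \<ge> 2" and LJ: "lukasiewicz J"
    using I J by (simp_all add: schroeder_pc_iff)
  have "J \<noteq> []" "last J = 0" using lukasiewicz_not_Nil lukasiewicz_last LJ by auto
  then have "lukasiewicz (butlast J @ 0 # [])" using LJ by (metis append_butlast_last_id)
  then have "lukasiewicz (prec_pc I J)"
    using lukasiewicz_graft[OF _ LI(1), of "butlast J" "[]"]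
      prec_pc_eq_butlast[OF \<open>J \<noteq> []\<close> \<open>last J = 0\<close>] by simp
  then show "prec_pc I J \<in> schroeder_pc"
    using LI prec_pc_eq_butlast[OF \<open>J \<noteq> []\<close> \<open>last J = 0\<close>] by (simp add: schroeder_pc_iff)
  obtain Y m where "J = zero_pad Y m" "no_trailing_zero Y" "m \<ge> 1"
    using schroeder_pc_zero_pad[OF J] by blast
  then obtain n where Y: "J = zero_pad Y (Suc n)" "no_trailing_zero Y"
    by (cases m) auto
  have succ: "succ_pc I J = Y @ I @ replicate n 0"
    unfolding succ_pc_def Y strip_zeros_zero_pad[OF Y(2)] trail_zeros_zero_pad[OF Y(2)] by simp
  have succ_L: "lukasiewicz (Y @ I @ replicate n 0)"
    using lukasiewicz_graft[OF _ LI(1), of Y] LJ Y(1) by (simp add: zero_pad_def)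
  then show "succ_pc I J \<in> schroeder_pc" using succ LI by (simp add: schroeder_pc_iff)
  obtain i R where iR: "I = i # R" "i > 0"
    using LI lukasiewicz_hd_nonzero by (cases I) fastforce+
  obtain Y' y where Yy: "Y = Y' @ [y]" "y > 0"
    using Y(2) by (cases Y rule: rev_cases) (auto simp: no_trailing_zero_def)
  have circ: "circ_pc I J = Y' @ (y + i) # R @ replicate n 0"
    unfolding circ_pc_def Y strip_zeros_zero_pad[OF Y(2)] trail_zeros_zero_pad[OF Y(2)]
    by (simp add: tri_join_def Yy iR)
  have "lukasiewicz (Y' @ (y + i) # R @ replicate n 0)"
    using lukasiewicz_merge[of Y' y i "R @ replicate n 0"] succ_L Yy iR by simp
  then show "circ_pc I J \<in> schroeder_pc" using circ LI iR by (simp add: schroeder_pc_iff)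
qed

section \<open>Normal forms\<close>

datatype op_kind = Prec | Circ | Succ

fun tri_op :: "('a \<Rightarrow> 'a \<Rightarrow> 'a) \<Rightarrow> ('a \<Rightarrow> 'a \<Rightarrow> 'a) \<Rightarrow> ('a \<Rightarrow> 'a \<Rightarrow> 'a) \<Rightarrow> op_kind \<Rightarrow> 'a \<Rightarrow> 'a \<Rightarrow> 'a" where
  "tri_op p c s Prec = p"
| "tri_op p c s Circ = c"
| "tri_op p c s Succ = s"

abbreviation pc_op :: "op_kind \<Rightarrow> nat list \<Rightarrow> nat list \<Rightarrow> nat list" where
  "pc_op \<equiv> tri_op prec_pc circ_pc succ_pc"

lemma pc_op_closed: "A \<in> schroeder_pc \<Longrightarrow> B \<in> schroeder_pc \<Longrightarrow> pc_op k A B \<in> schroeder_pc"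
  by (cases k) (simp_all add: prec_pc_closed circ_pc_closed succ_pc_closed)

definition generator :: "nat list" where
  "generator = [1, 0, 0]"

text \<open>Read from right to left, the identities rewrite \<open>A \<star> (B \<star>' C)\<close> into
  \<open>(A \<star>\<^sub>2 B) \<star>\<^sub>1 C\<close> for every pair \<open>(\<star>, \<star>')\<close> except \<open>(\<prec>, \<circ>)\<close> and \<open>(\<prec>, \<succ>)\<close>; the right factors
  admitted by \<open>normal_right\<close> are exactly those that block every rewrite.\<close>

definition normal_right :: "op_kind \<Rightarrow> nat list \<Rightarrow> bool" where
  "normal_right k B \<longleftrightarrow> B = generator \<or>
     k = Prec \<and> (\<exists>L\<in>schroeder_pc. B = succ_pc L generator \<or> B = circ_pc L generator)"

definition normal_form :: "nat list \<Rightarrow> op_kind \<times> nat list \<times> nat list \<Rightarrow> bool" where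
  "normal_form K t \<longleftrightarrow> (case t of (k, A, B) \<Rightarrow>
     A \<in> schroeder_pc \<and> B \<in> schroeder_pc \<and> pc_op k A B = K \<and> normal_right k B)"

lemma generator_pc: "generator \<in> schroeder_pc"
  by (simp add: schroeder_pc_iff generator_def lukasiewicz_def letter_weight_def less_Suc_eq)

lemma schroeder_pc_not_Nil: "A \<in> schroeder_pc \<Longrightarrow> A \<noteq> []"
  by (auto simp: schroeder_pc_iff)

lemma lukasiewicz_cases: "lukasiewicz T \<Longrightarrow> T = [0] \<or> T \<in> schroeder_pc"
  using lukasiewicz_length_ge_2_iff by (auto simp: schroeder_pc_iff)

lemma generator_strip: "strip_zeros generator = [1]" "trail_zeros generator = 2"
  using strip_zeros_zero_pad[of "[1]" 2] trail_zeros_zero_pad[of "[1]" 2]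
  by (simp_all add: no_trailing_zero_def zero_pad_def numeral_2_eq_2 generator_def)

lemma prec_pc_generator: "prec_pc A generator = 1 # 0 # A"
  by (subst prec_pc_eq_butlast) (simp_all add: generator_def)

lemma succ_pc_generator: "succ_pc A generator = 1 # A @ [0]"
  by (simp add: succ_pc_def generator_strip)

lemma circ_pc_generator: "A \<noteq> [] \<Longrightarrow> circ_pc A generator = Suc (hd A) # tl A @ [0]"
  by (cases A) (simp_all add: circ_pc_def generator_strip tri_join_def)

lemma prec_pc_succ_generator: "prec_pc A (succ_pc L generator) = 1 # L @ A"
  by (subst prec_pc_eq_butlast) (simp_all add: succ_pc_generator butlast_append)

lemma prec_pc_circ_generator: "L \<noteq> [] \<Longrightarrow> prec_pc A (circ_pc L generator) = Suc (hd L) # tl L @ A"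
  by (subst prec_pc_eq_butlast) (simp_all add: circ_pc_generator butlast_append)

lemma normal_form_cases:
  assumes "normal_form K (k, A, B)"
  obtains (prec_gen) "k = Prec" "B = generator" "K = 1 # 0 # A"
    | (succ_gen) "k = Succ" "B = generator" "K = 1 # A @ [0]"
    | (circ_gen) "k = Circ" "B = generator" "K = Suc (hd A) # tl A @ [0]"
    | (prec_succ) L where "L \<in> schroeder_pc" "k = Prec" "B = succ_pc L generator" "K = 1 # L @ A"
    | (prec_circ) L where "L \<in> schroeder_pc" "k = Prec" "B = circ_pc L generator"
        "K = Suc (hd L) # tl L @ A"
proof -
  have A: "A \<in> schroeder_pc" and K: "pc_op k A B = K" and B: "normal_right k B"
    using assms unfolding normal_form_def by auto
  show ?thesis
  proof (cases "B = generator")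
    case True
    then show ?thesis using that K schroeder_pc_not_Nil[OF A]
      by (cases k) (simp_all add: prec_pc_generator succ_pc_generator circ_pc_generator)
  next
    case False
    then show ?thesis using that K B schroeder_pc_not_Nil
      by (auto simp: normal_right_def prec_pc_succ_generator prec_pc_circ_generator)
  qed
qed

text \<open>If the root of \<open>K\<close> has children \<open>t\<^sub>1 \<dots> t\<^sub>n\<close>, the word \<open>(hd K - 1) # tl K\<close> is the code of the
  forest \<open>Leaf, t\<^sub>1, t\<^sub>2\<close> when \<open>n = 2\<close>, and of \<open>Node [t\<^sub>1, \<dots>, t\<^sub>n\<^sub>-\<^sub>1], t\<^sub>n\<close> when \<open>n \<ge> 3\<close>. This forest
  determines the normal form.\<close>

fun decode_forest :: "nat list list \<Rightarrow> op_kind \<times> nat list \<times> nat list" where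
  "decode_forest [[0], L, A] =
     (if L = [0] then (Prec, A, generator)
      else if A = [0] then (Succ, L, generator)
      else (Prec, A, succ_pc L generator))"
| "decode_forest [L, A] =
     (if A = [0] then (Circ, L, generator) else (Prec, A, circ_pc L generator))"
| "decode_forest _ = undefined"

lemma normal_form_forest:
  assumes "normal_form K t"
  obtains Fs where "\<forall>F\<in>set Fs. lukasiewicz F" "concat Fs = (hd K - 1) # tl K" "decode_forest Fs = t"
proof -
  obtain k A B where t: "t = (k, A, B)" by (cases t)
  have A: "A \<in> schroeder_pc" using assms t by (simp add: normal_form_def)
  have luk: "lukasiewicz [0]" "lukasiewicz A" and "A \<noteq> [0]"
    using A by (auto simp: schroeder_pc_iff lukasiewicz_singleton_iff)
  from assms[unfolded t] show thesis
  proof (cases rule: normal_form_cases)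
    case prec_gen
    then show thesis using that[of "[[0], [0], A]"] luk t by simp
  next
    case succ_gen
    then show thesis using that[of "[[0], A, [0]]"] luk t \<open>A \<noteq> [0]\<close> by simp
  next
    case circ_gen
    then show thesis using that[of "[A, [0]]"] luk t schroeder_pc_not_Nil[OF A] by simp
  next
    case (prec_succ L)
    then have "lukasiewicz L" "L \<noteq> [0]" by (auto simp: schroeder_pc_iff)
    then show thesis using that[of "[[0], L, A]"] prec_succ luk t \<open>A \<noteq> [0]\<close> by simp
  next
    case (prec_circ L)
    then have "lukasiewicz L" "L \<noteq> []" by (auto simp: schroeder_pc_iff)
    then show thesis using that[of "[L, A]"] prec_circ luk t \<open>A \<noteq> [0]\<close> by simp
  qed
qed

lemma normal_form_unique: "normal_form K t \<Longrightarrow> normal_form K t' \<Longrightarrow> t = t'"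
  by (metis normal_form_forest concat_lukasiewicz_inj)

lemma normal_form_exists:
  assumes K: "K \<in> schroeder_pc" "K \<noteq> generator"
  shows "\<exists>t. normal_form K t"
proof -
  have "lukasiewicz K" "length K \<ge> 2" using K by (simp_all add: schroeder_pc_iff)
  then obtain M T where KMT: "K = hd K # M @ T" and T: "T = [0] \<or> T \<in> schroeder_pc"
    and M: "hd K = 1 \<and> lukasiewicz M \<or> hd K \<ge> 2 \<and> lukasiewicz ((hd K - 1) # M)"
    using lukasiewicz_first_return lukasiewicz_cases by metis
  note gen = generator_pc succ_pc_closed[OF _ generator_pc] circ_pc_closed[OF _ generator_pc]
  from M show ?thesis
  proof
    assume "hd K = 1 \<and> lukasiewicz M"
    then have K1: "K = 1 # M @ T" and M: "M = [0] \<or> M \<in> schroeder_pc"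
      using KMT lukasiewicz_cases by auto
    consider "M = [0]" "T = [0]" | "M \<in> schroeder_pc" "T = [0]" | "M = [0]" "T \<in> schroeder_pc"
      | "M \<in> schroeder_pc" "T \<in> schroeder_pc"
      using M T by blast
    then show ?thesis
    proof cases
      case 1
      then show ?thesis using K K1 by (simp add: generator_def)
    next
      case 2
      then have "normal_form K (Succ, M, generator)"
        using K1 gen by (simp add: normal_form_def normal_right_def succ_pc_generator)
      then show ?thesis ..
    next
      case 3
      then have "normal_form K (Prec, T, generator)"
        using K1 gen by (simp add: normal_form_def normal_right_def prec_pc_generator)
      then show ?thesis ..
    next
      case 4
      then have "normal_form K (Prec, T, succ_pc M generator)"
        using K1 gen by (auto simp: normal_form_def normal_right_def prec_pc_succ_generator)
      then show ?thesis ..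
    qed
  next
    assume M: "hd K \<ge> 2 \<and> lukasiewicz ((hd K - 1) # M)"
    define L where "L = (hd K - 1) # M"
    have "M \<noteq> []" using M lukasiewicz_singleton_iff[of "hd K - 1"] by auto
    then have L: "L \<in> schroeder_pc" using M by (simp add: schroeder_pc_iff L_def Suc_le_eq)
    have K_L: "K = Suc (hd L) # tl L @ T" using KMT M by (simp add: L_def)
    from T show ?thesis
    proof
      assume "T = [0]"
      then have "normal_form K (Circ, L, generator)"
        using K_L L gen by (simp add: normal_form_def normal_right_def circ_pc_generator L_def)
      then show ?thesis ..
    next
      assume "T \<in> schroeder_pc"
      then have "normal_form K (Prec, T, circ_pc L generator)"
        using K_L L gen by (auto simp: normal_form_def normal_right_def prec_pc_circ_generator L_def)
      then show ?thesis ..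
    qed
  qed
qed

definition decomposition :: "nat list \<Rightarrow> op_kind \<times> nat list \<times> nat list" where
  "decomposition K = (THE t. normal_form K t)"

lemma decomposition_eq: "normal_form K t \<Longrightarrow> decomposition K = t"
  unfolding decomposition_def using normal_form_unique by blast

lemma normal_form_decomposition:
  "K \<in> schroeder_pc \<Longrightarrow> K \<noteq> generator \<Longrightarrow> normal_form K (decomposition K)"
  using normal_form_exists decomposition_eq by metis

lemma schroeder_pc_length_ge_3: "A \<in> schroeder_pc \<Longrightarrow> length A \<ge> 3"
proof (rule ccontr)
  assume A: "A \<in> schroeder_pc" "\<not> length A \<ge> 3"
  then have "length A = 2" by (simp add: schroeder_pc_iff)
  then obtain a b where "A = [a, b]" by (cases A rule: remdups_adj.cases) auto
  then show False using A(1) unfolding schroeder_pc_iff lukasiewicz_def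
    by (auto simp: letter_weight_def split: if_splits dest!: spec[where x=1])
qed

lemma normal_form_shorter:
  assumes "normal_form K (k, A, B)"
  shows "length A < length K \<and> length B < length K"
proof -
  have "length A \<ge> 3" using assms schroeder_pc_length_ge_3 by (simp add: normal_form_def)
  from assms show ?thesis
  proof (cases rule: normal_form_cases)
    case (prec_succ L)
    then show ?thesis using \<open>length A \<ge> 3\<close> by (simp add: succ_pc_generator)
  next
    case (prec_circ L)
    then show ?thesis using \<open>length A \<ge> 3\<close> schroeder_pc_not_Nil[of L] by (simp add: circ_pc_generator)
  qed (use \<open>length A \<ge> 3\<close> in \<open>auto simp: generator_def\<close>)
qed

lemma normal_form_not_generator:
  assumes "normal_form K (k, A, B)"
  shows "K \<noteq> generator"
proof -
  have "length A \<ge> 3" using assms schroeder_pc_length_ge_3 by (simp add: normal_form_def)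
  then show ?thesis using normal_form_shorter[OF assms] by (auto simp: generator_def)
qed

lemma decomposition_shorter:
  "K \<in> schroeder_pc \<Longrightarrow> K \<noteq> generator \<Longrightarrow> decomposition K = (k, A, B) \<Longrightarrow>
    length A < length K \<and> length B < length K"
  using normal_form_decomposition normal_form_shorter by metis

section \<open>Evaluation in a triduplicial algebra\<close>

fun reassoc :: "op_kind \<Rightarrow> op_kind \<Rightarrow> (op_kind \<times> op_kind) option" where
  "reassoc Prec Prec = Some (Prec, Prec)"
| "reassoc Circ Circ = Some (Circ, Circ)"
| "reassoc Succ Succ = Some (Succ, Succ)"
| "reassoc Succ Prec = Some (Prec, Succ)"
| "reassoc Circ Prec = Some (Prec, Circ)"
| "reassoc Succ Circ = Some (Circ, Succ)"
| "reassoc Circ Succ = Some (Succ, Circ)"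
| "reassoc Prec _ = None"

lemma tri_op_reassoc:
  assumes "tridup_identities X p c s" "reassoc k k' = Some (k\<^sub>1, k\<^sub>2)" "x \<in> X" "y \<in> X" "z \<in> X"
  shows "tri_op p c s k x (tri_op p c s k' y z) = tri_op p c s k\<^sub>1 (tri_op p c s k\<^sub>2 x y) z"
  using assms unfolding tridup_identities_def by (cases k; cases k') auto

lemma reassoc_None: "reassoc k k' = None \<Longrightarrow> k = Prec \<and> k' \<noteq> Prec"
  by (cases k; cases k') auto

context
  fixes p c s :: "'w \<Rightarrow> 'w \<Rightarrow> 'w" and w :: 'w
begin

function tri_eval :: "nat list \<Rightarrow> 'w" where
  "tri_eval K =
     (if K \<in> schroeder_pc \<and> K \<noteq> generator then
        (case decomposition K of (k, A, B) \<Rightarrow> tri_op p c s k (tri_eval A) (tri_eval B))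
      else w)"
  by auto
termination
  by (relation "measure length")
    (auto dest: decomposition_shorter simp: eq_commute[of _ "decomposition _"])

declare tri_eval.simps [simp del]

lemma tri_eval_generator: "tri_eval generator = w"
  by (simp add: tri_eval.simps)

lemma tri_eval_normal_form:
  assumes "normal_form K (k, A, B)"
  shows "tri_eval K = tri_op p c s k (tri_eval A) (tri_eval B)"
proof -
  have "K \<in> schroeder_pc" using assms pc_op_closed by (auto simp: normal_form_def)
  then show ?thesis
    using normal_form_not_generator[OF assms] decomposition_eq[OF assms] by (simp add: tri_eval.simps)
qed

text \<open>Induction on \<open>B\<close>: either \<open>A \<star> B\<close> is already a normal form, or \<open>B = B\<^sub>1 \<star>' B\<^sub>2\<close> and an
  identity moves \<open>A \<star> (B\<^sub>1 \<star>' B\<^sub>2)\<close> to \<open>(A \<star>\<^sub>2 B\<^sub>1) \<star>\<^sub>1 B\<^sub>2\<close>, whose right factor is shorter.\<close>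

lemma tri_eval_pc_op:
  assumes T: "tridup_identities UNIV p c s"
  shows "A \<in> schroeder_pc \<Longrightarrow> B \<in> schroeder_pc \<Longrightarrow>
    tri_eval (pc_op k A B) = tri_op p c s k (tri_eval A) (tri_eval B)"
proof (induction "length B" arbitrary: A B k rule: less_induct)
  case less
  note A = less.prems(1) and B = less.prems(2)
  show ?case
  proof (cases "B = generator")
    case True
    then have "normal_form (pc_op k A B) (k, A, B)" using A B by (simp add: normal_form_def normal_right_def)
    then show ?thesis by (rule tri_eval_normal_form)
  next
    case False
    obtain k' B\<^sub>1 B\<^sub>2 where "decomposition B = (k', B\<^sub>1, B\<^sub>2)" by (cases "decomposition B")
    then have NB: "normal_form B (k', B\<^sub>1, B\<^sub>2)" using normal_form_decomposition[OF B False] by simp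
    then have B_eq: "B = pc_op k' B\<^sub>1 B\<^sub>2" and B12: "B\<^sub>1 \<in> schroeder_pc" "B\<^sub>2 \<in> schroeder_pc"
      and "normal_right k' B\<^sub>2"
      by (auto simp: normal_form_def)
    have shorter: "length B\<^sub>1 < length B" "length B\<^sub>2 < length B" using normal_form_shorter[OF NB] by auto
    show ?thesis
    proof (cases "reassoc k k'")
      case None
      then have "k = Prec" "k' \<noteq> Prec" using reassoc_None by auto
      then have "B\<^sub>2 = generator" using \<open>normal_right k' B\<^sub>2\<close> by (simp add: normal_right_def)
      then have "normal_form (pc_op k A B) (k, A, B)"
        using A B B12 B_eq \<open>k = Prec\<close> \<open>k' \<noteq> Prec\<close> by (cases k') (auto simp: normal_form_def normal_right_def)
      then show ?thesis by (rule tri_eval_normal_form)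
    next
      case (Some r)
      then obtain k\<^sub>1 k\<^sub>2 where r: "reassoc k k' = Some (k\<^sub>1, k\<^sub>2)" by (cases r) auto
      have AB1: "pc_op k\<^sub>2 A B\<^sub>1 \<in> schroeder_pc" using pc_op_closed A B12 by simp
      have "tri_eval (pc_op k A B) = tri_eval (pc_op k\<^sub>1 (pc_op k\<^sub>2 A B\<^sub>1) B\<^sub>2)"
        using tri_op_reassoc[OF schroeder_pc_tridup_identities r A B12] B_eq by simp
      also have "\<dots> = tri_op p c s k\<^sub>1 (tri_op p c s k\<^sub>2 (tri_eval A) (tri_eval B\<^sub>1)) (tri_eval B\<^sub>2)"
        using less.hyps shorter A B12 AB1 by simp
      also have "\<dots> = tri_op p c s k (tri_eval A) (tri_op p c s k' (tri_eval B\<^sub>1) (tri_eval B\<^sub>2))"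
        using tri_op_reassoc[OF T r] by simp
      also have "tri_op p c s k' (tri_eval B\<^sub>1) (tri_eval B\<^sub>2) = tri_eval B"
        using tri_eval_normal_form[OF NB] by simp
      finally show ?thesis .
    qed
  qed
qed

end

section \<open>Bilinear extension\<close>

abbreviation supp :: "(nat list \<Rightarrow> complex) \<Rightarrow> nat list set" where
  "supp f \<equiv> {I. f I \<noteq> 0}"

lemma Vset_iff: "f \<in> Vset \<longleftrightarrow> finite (supp f) \<and> supp f \<subseteq> schroeder_pc"
  by (simp add: Vset_def)

lemma zeroV_Vset: "zeroV \<in> Vset"
  by (simp add: Vset_iff zeroV_def)

lemma addV_Vset: "f \<in> Vset \<Longrightarrow> g \<in> Vset \<Longrightarrow> addV f g \<in> Vset"
proof -
  have "supp (addV f g) \<subseteq> supp f \<union> supp g" by (auto simp: addV_def)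
  then show "f \<in> Vset \<Longrightarrow> g \<in> Vset \<Longrightarrow> addV f g \<in> Vset"
    unfolding Vset_iff by (meson finite_UnI finite_subset le_sup_iff subset_trans)
qed

lemma scaleV_Vset: "f \<in> Vset \<Longrightarrow> scaleV a f \<in> Vset"
proof -
  have "supp (scaleV a f) \<subseteq> supp f" by (auto simp: scaleV_def)
  then show "f \<in> Vset \<Longrightarrow> scaleV a f \<in> Vset" unfolding Vset_iff using finite_subset by blast
qed

lemma basisV_Vset: "K \<in> schroeder_pc \<Longrightarrow> basisV K \<in> Vset"
  by (simp add: Vset_iff basisV_def)

lemma supp_basisV: "supp (basisV I) = {I}"
  by (auto simp: basisV_def)

lemma sum_pushforward:
  assumes "finite Ms" "\<And>I J. I \<in> A \<Longrightarrow> J \<in> B \<Longrightarrow> g I J \<in> Ms"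
  shows "(\<Sum>M\<in>Ms. \<Sum>I\<in>A. \<Sum>J\<in>B. if g I J = M then H I J M else 0) = (\<Sum>I\<in>A. \<Sum>J\<in>B. H I J (g I J))"
proof -
  have "(\<Sum>M\<in>Ms. \<Sum>I\<in>A. \<Sum>J\<in>B. if g I J = M then H I J M else 0)
      = (\<Sum>I\<in>A. \<Sum>J\<in>B. \<Sum>M\<in>Ms. if g I J = M then H I J M else 0)"
    by (subst sum.swap) (simp add: sum.swap[of _ Ms])
  also have "\<dots> = (\<Sum>I\<in>A. \<Sum>J\<in>B. H I J (g I J))"
    using assms by (intro sum.cong refl) auto
  finally show ?thesis .
qed

lemma sum_if_cond_out: "(\<Sum>x\<in>A. if P then f x else 0) = (if P then \<Sum>x\<in>A. f x else 0)"
  by simp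

lemma bilin_ext_eq_sum:
  assumes "finite A" "finite B" "supp f \<subseteq> A" "supp g \<subseteq> B"
  shows "bilin_ext b f g K = (\<Sum>I\<in>A. \<Sum>J\<in>B. if b I J = K then f I * g J else 0)"
proof -
  have "bilin_ext b f g K = (\<Sum>(I, J)\<in>supp f \<times> supp g. if b I J = K then f I * g J else 0)"
    by (simp add: bilin_ext_def sum.cartesian_product)
  also have "\<dots> = (\<Sum>(I, J)\<in>A \<times> B. if b I J = K then f I * g J else 0)"
    using assms by (intro sum.mono_neutral_left) (auto split: if_splits)
  finally show ?thesis by (simp add: sum.cartesian_product)
qed

lemma supp_bilin_ext: "supp (bilin_ext b f g) \<subseteq> (\<lambda>(I, J). b I J) ` (supp f \<times> supp g)"
proof
  fix K assume "K \<in> supp (bilin_ext b f g)"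
  then have "(\<Sum>(I, J)\<in>supp f \<times> supp g. if b I J = K then f I * g J else 0) \<noteq> 0"
    by (simp add: bilin_ext_def sum.cartesian_product)
  then obtain x where "x \<in> supp f \<times> supp g" "(case x of (I, J) \<Rightarrow> if b I J = K then f I * g J else 0) \<noteq> 0"
    by (rule sum.not_neutral_contains_not_neutral)
  then show "K \<in> (\<lambda>(I, J). b I J) ` (supp f \<times> supp g)" by (auto split: if_splits)
qed

lemma bilin_ext_Vset:
  assumes f: "f \<in> Vset" and g: "g \<in> Vset"
    and b: "\<And>I J. I \<in> schroeder_pc \<Longrightarrow> J \<in> schroeder_pc \<Longrightarrow> b I J \<in> schroeder_pc"
  shows "bilin_ext b f g \<in> Vset"
proof -
  let ?S = "(\<lambda>(I, J). b I J) ` (supp f \<times> supp g)"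
  have "finite ?S" using f g by (simp add: Vset_iff)
  moreover have "?S \<subseteq> schroeder_pc"
  proof
    fix K assume "K \<in> ?S"
    then obtain I J where "K = b I J" "I \<in> supp f" "J \<in> supp g" by auto
    then show "K \<in> schroeder_pc" using f g b unfolding Vset_iff by auto
  qed
  moreover have "supp (bilin_ext b f g) \<subseteq> ?S" by (rule supp_bilin_ext)
  ultimately show ?thesis unfolding Vset_iff by (meson finite_subset order_trans)
qed

lemma bilin_ext_basisV: "bilin_ext b (basisV I) (basisV J) = basisV (b I J)"
  by (rule ext) (simp add: bilin_ext_def supp_basisV basisV_def)

lemma bilin_ext_swap: "bilin_ext b f g = bilin_ext (\<lambda>J I. b I J) g f"
  unfolding bilin_ext_def by (rule ext, subst sum.swap) (simp add: mult.commute cong: if_cong)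

lemma bilin_ext_add_left:
  assumes "f \<in> Vset" "g \<in> Vset" "h \<in> Vset"
  shows "bilin_ext b (addV f g) h = addV (bilin_ext b f h) (bilin_ext b g h)"
proof
  fix K
  let ?A = "supp f \<union> supp g"
  have fin: "finite ?A" "finite (supp h)" using assms by (simp_all add: Vset_iff)
  have supp: "supp f \<subseteq> ?A" "supp g \<subseteq> ?A" "supp (addV f g) \<subseteq> ?A" by (auto simp: addV_def)
  show "bilin_ext b (addV f g) h K = addV (bilin_ext b f h) (bilin_ext b g h) K"
    unfolding addV_def bilin_ext_eq_sum[OF fin supp(1) order_refl]
      bilin_ext_eq_sum[OF fin supp(2) order_refl] bilin_ext_eq_sum[OF fin supp(3)[unfolded addV_def] order_refl]
    by (simp only: sum.distrib[symmetric]) (intro sum.cong refl; simp add: distrib_right)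
qed

lemma bilin_ext_scale_left:
  assumes "f \<in> Vset" "g \<in> Vset"
  shows "bilin_ext b (scaleV a f) g = scaleV a (bilin_ext b f g)"
proof
  fix K
  have fin: "finite (supp f)" "finite (supp g)" using assms by (simp_all add: Vset_iff)
  have supp: "supp (scaleV a f) \<subseteq> supp f" by (auto simp: scaleV_def)
  show "bilin_ext b (scaleV a f) g K = scaleV a (bilin_ext b f g) K"
    unfolding scaleV_def bilin_ext_eq_sum[OF fin order_refl order_refl]
      bilin_ext_eq_sum[OF fin supp[unfolded scaleV_def] order_refl]
    by (simp add: sum_distrib_left) (intro sum.cong refl; simp add: mult.assoc)
qed

lemma bilin_ext_add_right:
  "f \<in> Vset \<Longrightarrow> g \<in> Vset \<Longrightarrow> h \<in> Vset \<Longrightarrow>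
    bilin_ext b h (addV f g) = addV (bilin_ext b h f) (bilin_ext b h g)"
  by (subst (1 2 3) bilin_ext_swap) (rule bilin_ext_add_left)

lemma bilin_ext_scale_right:
  "f \<in> Vset \<Longrightarrow> g \<in> Vset \<Longrightarrow> bilin_ext b f (scaleV a g) = scaleV a (bilin_ext b f g)"
  by (subst (1 2) bilin_ext_swap) (rule bilin_ext_scale_left)

lemma bilin_ext_nested_left:
  assumes "f \<in> Vset" "g \<in> Vset" "h \<in> Vset"
  shows "bilin_ext b\<^sub>1 (bilin_ext b\<^sub>2 f g) h K =
    (\<Sum>I\<in>supp f. \<Sum>J\<in>supp g. \<Sum>L\<in>supp h. if b\<^sub>1 (b\<^sub>2 I J) L = K then f I * g J * h L else 0)"
proof -
  define Ms where "Ms = (\<lambda>(I, J). b\<^sub>2 I J) ` (supp f \<times> supp g)"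
  have fin: "finite Ms" "finite (supp h)" using assms by (simp_all add: Ms_def Vset_iff)
  have "bilin_ext b\<^sub>1 (bilin_ext b\<^sub>2 f g) h K
      = (\<Sum>M\<in>Ms. \<Sum>L\<in>supp h. if b\<^sub>1 M L = K then bilin_ext b\<^sub>2 f g M * h L else 0)"
    using supp_bilin_ext[of b\<^sub>2 f g] by (intro bilin_ext_eq_sum fin) (simp_all add: Ms_def)
  also have "\<dots> = (\<Sum>M\<in>Ms. \<Sum>I\<in>supp f. \<Sum>J\<in>supp g. if b\<^sub>2 I J = M
      then (\<Sum>L\<in>supp h. if b\<^sub>1 M L = K then f I * g J * h L else 0) else 0)"
  proof (rule sum.cong[OF refl])
    fix M
    have "(if b\<^sub>1 M L = K then bilin_ext b\<^sub>2 f g M * h L else 0) = (\<Sum>I\<in>supp f. \<Sum>J\<in>supp g.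
        if b\<^sub>2 I J = M then (if b\<^sub>1 M L = K then f I * g J * h L else 0) else 0)" for L
      by (cases "b\<^sub>1 M L = K")
        (simp_all add: bilin_ext_def sum_distrib_right if_distrib[of "\<lambda>x. x * h L"] cong: if_cong)
    then have "(\<Sum>L\<in>supp h. if b\<^sub>1 M L = K then bilin_ext b\<^sub>2 f g M * h L else 0)
      = (\<Sum>I\<in>supp f. \<Sum>J\<in>supp g. \<Sum>L\<in>supp h.
          if b\<^sub>2 I J = M then (if b\<^sub>1 M L = K then f I * g J * h L else 0) else 0)"
      by (simp add: sum.swap[of _ "supp h"])
    then show "(\<Sum>L\<in>supp h. if b\<^sub>1 M L = K then bilin_ext b\<^sub>2 f g M * h L else 0)
      = (\<Sum>I\<in>supp f. \<Sum>J\<in>supp g. if b\<^sub>2 I J = M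
          then (\<Sum>L\<in>supp h. if b\<^sub>1 M L = K then f I * g J * h L else 0) else 0)"
      by (simp only: sum_if_cond_out)
  qed
  also have "\<dots> = (\<Sum>I\<in>supp f. \<Sum>J\<in>supp g. \<Sum>L\<in>supp h.
      if b\<^sub>1 (b\<^sub>2 I J) L = K then f I * g J * h L else 0)"
    by (rule sum_pushforward[OF fin(1)]) (auto simp: Ms_def)
  finally show ?thesis .
qed

lemma bilin_ext_nested_right:
  assumes "f \<in> Vset" "g \<in> Vset" "h \<in> Vset"
  shows "bilin_ext b\<^sub>1 f (bilin_ext b\<^sub>2 g h) K =
    (\<Sum>I\<in>supp f. \<Sum>J\<in>supp g. \<Sum>L\<in>supp h. if b\<^sub>1 I (b\<^sub>2 J L) = K then f I * g J * h L else 0)"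
proof -
  have "bilin_ext b\<^sub>1 f (bilin_ext b\<^sub>2 g h) K =
      (\<Sum>J\<in>supp g. \<Sum>L\<in>supp h. \<Sum>I\<in>supp f. if b\<^sub>1 I (b\<^sub>2 J L) = K then g J * h L * f I else 0)"
    by (subst bilin_ext_swap) (rule bilin_ext_nested_left[OF assms(2,3,1)])
  also have "\<dots> = (\<Sum>J\<in>supp g. \<Sum>I\<in>supp f. \<Sum>L\<in>supp h.
      if b\<^sub>1 I (b\<^sub>2 J L) = K then f I * g J * h L else 0)"
    by (rule sum.cong[OF refl], subst sum.swap) (simp add: mult_ac cong: if_cong)
  also have "\<dots> = (\<Sum>I\<in>supp f. \<Sum>J\<in>supp g. \<Sum>L\<in>supp h.
      if b\<^sub>1 I (b\<^sub>2 J L) = K then f I * g J * h L else 0)"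
    by (rule sum.swap)
  finally show ?thesis .
qed

lemma bilin_ext_assoc:
  assumes "f \<in> Vset" "g \<in> Vset" "h \<in> Vset"
    and "\<And>I J L. I \<in> schroeder_pc \<Longrightarrow> J \<in> schroeder_pc \<Longrightarrow> L \<in> schroeder_pc \<Longrightarrow>
      b\<^sub>1 (b\<^sub>2 I J) L = b\<^sub>3 I (b\<^sub>4 J L)"
  shows "bilin_ext b\<^sub>1 (bilin_ext b\<^sub>2 f g) h = bilin_ext b\<^sub>3 f (bilin_ext b\<^sub>4 g h)"
proof
  fix K
  have "I \<in> supp f \<Longrightarrow> J \<in> supp g \<Longrightarrow> L \<in> supp h \<Longrightarrow> b\<^sub>1 (b\<^sub>2 I J) L = b\<^sub>3 I (b\<^sub>4 J L)"
    for I J L using assms unfolding Vset_iff by blast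
  then show "bilin_ext b\<^sub>1 (bilin_ext b\<^sub>2 f g) h K = bilin_ext b\<^sub>3 f (bilin_ext b\<^sub>4 g h) K"
    unfolding bilin_ext_nested_left[OF assms(1-3)] bilin_ext_nested_right[OF assms(1-3)]
    by (intro sum.cong refl) simp
qed

lemma tridup_identities_bilin_ext:
  assumes "tridup_identities schroeder_pc p c s"
  shows "tridup_identities Vset (bilin_ext p) (bilin_ext c) (bilin_ext s)"
  unfolding tridup_identities_def
  by (intro ballI conjI; rule bilin_ext_assoc) (use assms in \<open>simp_all add: tridup_identities_def\<close>)

lemma V_triduplicial: V_is_triduplicial
proof -
  have bilinear: "(\<forall>f\<in>Vset. \<forall>g\<in>Vset. bilin_ext b f g \<in> Vset) \<and>
     (\<forall>f\<in>Vset. \<forall>g\<in>Vset. \<forall>h\<in>Vset.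
        bilin_ext b (addV f g) h = addV (bilin_ext b f h) (bilin_ext b g h) \<and>
        bilin_ext b h (addV f g) = addV (bilin_ext b h f) (bilin_ext b h g)) \<and>
     (\<forall>a. \<forall>f\<in>Vset. \<forall>g\<in>Vset. bilin_ext b (scaleV a f) g = scaleV a (bilin_ext b f g) \<and>
        bilin_ext b f (scaleV a g) = scaleV a (bilin_ext b f g))"
    if "\<And>I J. I \<in> schroeder_pc \<Longrightarrow> J \<in> schroeder_pc \<Longrightarrow> b I J \<in> schroeder_pc" for b
    by (intro conjI ballI allI) (simp_all add: that bilin_ext_Vset bilin_ext_add_left
        bilin_ext_add_right bilin_ext_scale_left bilin_ext_scale_right)
  show ?thesis
    unfolding V_is_triduplicial_def precV_def circV_def succV_def
    using zeroV_Vset addV_Vset scaleV_Vset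
      tridup_identities_bilin_ext[OF schroeder_pc_tridup_identities]
      bilinear[OF prec_pc_closed] bilinear[OF circ_pc_closed] bilinear[OF succ_pc_closed]
    by auto
qed

section \<open>Freeness\<close>

definition lin_ext :: "(complex \<Rightarrow> 'w::ab_group_add \<Rightarrow> 'w) \<Rightarrow> (nat list \<Rightarrow> 'w) \<Rightarrow> (nat list \<Rightarrow> complex) \<Rightarrow> 'w" where
  "lin_ext sc F f = (\<Sum>K\<in>supp f. sc (f K) (F K))"

lemma linear_sum_scale:
  assumes "Vector_Spaces.linear sc sc h"
  shows "h (\<Sum>i\<in>A. sc (a i) (x i)) = (\<Sum>i\<in>A. sc (a i) (h (x i)))"
proof -
  interpret Vector_Spaces.linear sc sc h by fact
  show ?thesis by (simp add: sum scale)
qed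

context
  fixes sc :: "complex \<Rightarrow> 'w::ab_group_add \<Rightarrow> 'w"
  assumes vs: "vector_space sc"
begin

interpretation vector_space sc by (rule vs)

lemma lin_ext_basisV: "lin_ext sc F (basisV I) = F I"
  by (simp add: lin_ext_def supp_basisV basisV_def)

lemma lin_ext_eq_sum: "finite A \<Longrightarrow> supp f \<subseteq> A \<Longrightarrow> lin_ext sc F f = (\<Sum>K\<in>A. sc (f K) (F K))"
  unfolding lin_ext_def by (rule sum.mono_neutral_left) auto

lemma lin_ext_addV:
  assumes "f \<in> Vset" "g \<in> Vset"
  shows "lin_ext sc F (addV f g) = lin_ext sc F f + lin_ext sc F g"
proof -
  let ?A = "supp f \<union> supp g"
  have A: "finite ?A" using assms by (simp add: Vset_iff)
  have s: "supp f \<subseteq> ?A" "supp g \<subseteq> ?A" "supp (addV f g) \<subseteq> ?A" by (auto simp: addV_def)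
  show ?thesis unfolding lin_ext_eq_sum[OF A s(1)] lin_ext_eq_sum[OF A s(2)] lin_ext_eq_sum[OF A s(3)]
    by (simp add: addV_def scale_left_distrib sum.distrib)
qed

lemma lin_ext_scaleV:
  assumes "f \<in> Vset"
  shows "lin_ext sc F (scaleV a f) = sc a (lin_ext sc F f)"
proof -
  have "finite (supp f)" "supp (scaleV a f) \<subseteq> supp f" using assms by (auto simp: Vset_iff scaleV_def)
  then show ?thesis unfolding lin_ext_eq_sum[OF \<open>finite (supp f)\<close> \<open>supp (scaleV a f) \<subseteq> supp f\<close>]
    by (simp add: lin_ext_def scaleV_def scale_sum_right)
qed

lemma lin_ext_bilin_ext:
  assumes f: "f \<in> Vset" and g: "g \<in> Vset" and op: "bilinear_wrt sc op"
    and hom: "\<And>I J. I \<in> schroeder_pc \<Longrightarrow> J \<in> schroeder_pc \<Longrightarrow> F (b I J) = op (F I) (F J)"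
  shows "lin_ext sc F (bilin_ext b f g) = op (lin_ext sc F f) (lin_ext sc F g)"
proof -
  define Ms where "Ms = (\<lambda>(I, J). b I J) ` (supp f \<times> supp g)"
  have fin: "finite Ms" using f g by (simp add: Ms_def Vset_iff)
  have "lin_ext sc F (bilin_ext b f g) = (\<Sum>M\<in>Ms. sc (bilin_ext b f g M) (F M))"
    using supp_bilin_ext[of b f g] by (intro lin_ext_eq_sum fin) (simp add: Ms_def)
  also have "\<dots> = (\<Sum>M\<in>Ms. \<Sum>I\<in>supp f. \<Sum>J\<in>supp g. if b I J = M then sc (f I * g J) (F M) else 0)"
    unfolding bilin_ext_def by (simp add: scale_sum_left if_distrib[of "\<lambda>a. sc a _"] cong: if_cong)
  also have "\<dots> = (\<Sum>I\<in>supp f. \<Sum>J\<in>supp g. sc (f I * g J) (F (b I J)))"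
    by (rule sum_pushforward[OF fin]) (auto simp: Ms_def)
  also have "\<dots> = (\<Sum>I\<in>supp f. sc (f I) (\<Sum>J\<in>supp g. sc (g J) (op (F I) (F J))))"
    using f g hom by (simp add: Vset_iff scale_sum_right subset_iff)
  also have "\<dots> = (\<Sum>I\<in>supp f. sc (f I) (op (F I) (lin_ext sc F g)))"
    using op unfolding bilinear_wrt_def lin_ext_def by (simp add: linear_sum_scale)
  also have "\<dots> = op (lin_ext sc F f) (lin_ext sc F g)"
    using op linear_sum_scale[of sc "\<lambda>x. op x (lin_ext sc F g)" f F "supp f"]
    unfolding bilinear_wrt_def lin_ext_def[of sc F f] by simp
  finally show ?thesis .
qed

end

lemma lin_ext_tri_eval_V_morphism:
  assumes "triduplicial_algebra sc p c s"
  shows "V_morphism sc p c s (lin_ext sc (tri_eval p c s w))"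
proof -
  have vs: "vector_space sc" and T: "tridup_identities UNIV p c s"
    and op: "bilinear_wrt sc p" "bilinear_wrt sc c" "bilinear_wrt sc s"
    using assms by (simp_all add: triduplicial_algebra_def)
  have "tri_eval p c s w (prec_pc I J) = p (tri_eval p c s w I) (tri_eval p c s w J)"
    "tri_eval p c s w (circ_pc I J) = c (tri_eval p c s w I) (tri_eval p c s w J)"
    "tri_eval p c s w (succ_pc I J) = s (tri_eval p c s w I) (tri_eval p c s w J)"
    if "I \<in> schroeder_pc" "J \<in> schroeder_pc" for I J
    using tri_eval_pc_op[OF T that, where k=Prec] tri_eval_pc_op[OF T that, where k=Circ]
      tri_eval_pc_op[OF T that, where k=Succ] by simp_all
  then show ?thesis
    unfolding V_morphism_def precV_def circV_def succV_def
    by (simp add: lin_ext_addV[OF vs] lin_ext_scaleV[OF vs] lin_ext_bilin_ext[OF vs _ _ op(1)]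
        lin_ext_bilin_ext[OF vs _ _ op(2)] lin_ext_bilin_ext[OF vs _ _ op(3)])
qed

lemma V_morphism_eq_basis_expansion:
  assumes \<psi>: "V_morphism sc p c s \<psi>" and v: "v \<in> Vset"
  shows "\<psi> v = (\<Sum>K\<in>supp v. sc (v K) (\<psi> (basisV K)))"
proof -
  have "finite F \<Longrightarrow> v \<in> Vset \<Longrightarrow> supp v = F \<Longrightarrow> \<psi> v = (\<Sum>K\<in>F. sc (v K) (\<psi> (basisV K)))" for F v
  proof (induction F arbitrary: v rule: finite_induct)
    case empty
    then have "v = zeroV" by (auto simp: zeroV_def)
    moreover have "addV zeroV zeroV = zeroV" by (simp add: addV_def zeroV_def)
    then have "\<psi> zeroV = \<psi> zeroV + \<psi> zeroV" using \<psi> zeroV_Vset unfolding V_morphism_def by metis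
    ultimately show ?case by simp
  next
    case (insert K F)
    define v' where "v' = v(K := 0)"
    have K: "K \<in> schroeder_pc" using insert.prems by (auto simp: Vset_iff)
    have supp_v': "supp v' = F" using insert.prems insert.hyps by (auto simp: v'_def)
    have v': "v' \<in> Vset" using insert.prems supp_v' insert.hyps by (auto simp: Vset_iff)
    have "v = addV (scaleV (v K) (basisV K)) v'"
      by (auto simp: v'_def addV_def scaleV_def basisV_def)
    then have "\<psi> v = sc (v K) (\<psi> (basisV K)) + \<psi> v'"
      using \<psi> scaleV_Vset basisV_Vset[OF K] v' unfolding V_morphism_def by metis
    also have "\<psi> v' = (\<Sum>K'\<in>F. sc (v' K') (\<psi> (basisV K')))"
      by (rule insert.IH[OF v' supp_v'])
    also have "\<dots> = (\<Sum>K'\<in>F. sc (v K') (\<psi> (basisV K')))"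
      using insert.hyps by (intro sum.cong refl) (auto simp: v'_def)
    finally show ?case using insert.hyps by simp
  qed
  then show ?thesis using v by (simp add: Vset_iff)
qed

lemma V_morphism_basisV:
  assumes \<psi>: "V_morphism sc p c s \<psi>" and gen: "\<psi> (basisV generator) = w"
  shows "K \<in> schroeder_pc \<Longrightarrow> \<psi> (basisV K) = tri_eval p c s w K"
proof (induction "length K" arbitrary: K rule: less_induct)
  case less
  show ?case
  proof (cases "K = generator")
    case True
    then show ?thesis using gen by (simp add: tri_eval_generator)
  next
    case False
    obtain k A B where "decomposition K = (k, A, B)" by (cases "decomposition K")
    then have N: "normal_form K (k, A, B)" using normal_form_decomposition[OF less.prems False] by simp
    then have AB: "A \<in> schroeder_pc" "B \<in> schroeder_pc" "K = pc_op k A B"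
      by (auto simp: normal_form_def)
    have "\<psi> (basisV K) = \<psi> (bilin_ext (pc_op k) (basisV A) (basisV B))"
      using AB by (simp add: bilin_ext_basisV)
    also have "\<dots> = tri_op p c s k (\<psi> (basisV A)) (\<psi> (basisV B))"
      using \<psi> basisV_Vset AB by (cases k) (simp_all add: V_morphism_def precV_def circV_def succV_def)
    also have "\<dots> = tri_eval p c s w K"
      using less.hyps normal_form_shorter[OF N] AB(1,2) by (simp add: tri_eval_normal_form[OF N])
    finally show ?thesis .
  qed
qed

lemma V_morphism_unique:
  assumes \<psi>: "V_morphism sc p c s \<psi>" and gen: "\<psi> (basisV generator) = w" and v: "v \<in> Vset"
  shows "\<psi> v = lin_ext sc (tri_eval p c s w) v"
proof -
  have "\<psi> v = (\<Sum>K\<in>supp v. sc (v K) (\<psi> (basisV K)))" by (rule V_morphism_eq_basis_expansion[OF \<psi> v])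
  also have "\<dots> = lin_ext sc (tri_eval p c s w) v"
    unfolding lin_ext_def using v V_morphism_basisV[OF \<psi> gen] by (intro sum.cong refl) (auto simp: Vset_iff)
  finally show ?thesis .
qed

theorem mainTheorem4:
  fixes sc :: "complex \<Rightarrow> 'w::ab_group_add \<Rightarrow> 'w"
    and p c s :: "'w \<Rightarrow> 'w \<Rightarrow> 'w" and w :: 'w
  shows "V_is_triduplicial \<and>
    (triduplicial_algebra sc p c s \<longrightarrow>
      (\<exists>\<phi>. V_morphism sc p c s \<phi> \<and> \<phi> (basisV [1,0,0]) = w \<and>
        (\<forall>\<psi>. V_morphism sc p c s \<psi> \<and> \<psi> (basisV [1,0,0]) = w \<longrightarrow>
              (\<forall>v\<in>Vset. \<psi> v = \<phi> v))))"
proof (intro conjI impI)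
  show V_is_triduplicial by (rule V_triduplicial)
  assume W: "triduplicial_algebra sc p c s"
  then have vs: "vector_space sc" by (simp add: triduplicial_algebra_def)
  let ?\<phi> = "lin_ext sc (tri_eval p c s w)"
  have "?\<phi> (basisV generator) = w" by (simp add: lin_ext_basisV[OF vs] tri_eval_generator)
  moreover have "\<psi> v = ?\<phi> v"
    if "V_morphism sc p c s \<psi>" "\<psi> (basisV generator) = w" "v \<in> Vset" for \<psi> v
    using V_morphism_unique[OF that] .
  ultimately show "\<exists>\<phi>. V_morphism sc p c s \<phi> \<and> \<phi> (basisV [1,0,0]) = w \<and>
      (\<forall>\<psi>. V_morphism sc p c s \<psi> \<and> \<psi> (basisV [1,0,0]) = w \<longrightarrow> (\<forall>v\<in>Vset. \<psi> v = \<phi> v))"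
    using lin_ext_tri_eval_V_morphism[OF W] unfolding generator_def by blast
qed

end
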